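(* Let $G=(V,E)$ be a strongly connected digraph, $s\in V$, and let $v,w$ be two distinct vertices of $G$. Then $v \leftrightarrow_{\mathrm{2e}} w$ in $G$ if and only if there is a subtree root $r$ such that $v$ and $w$ are both ordinary vertices of the auxiliary graph $G_r$ (i.e., $v,w\in T(r)$) and $v \leftrightarrow_{\mathrm{2e}} w$ in $G_r$.
   Context: For vertices $v,w$ of a digraph $H$, $v \leftrightarrow_{\mathrm{2e}} w$ in $H$ means $v=w$, or there are two edge-disjoint directed paths from $v$ to $w$ and two edge-disjoint directed paths from $w$ to $v$ in $H$. For a digraph $G=(V,E)$ and $s\in V$ with every vertex reachable from $s$: $u$ dominates $w$ in the flow graph $G(s)$ if every path from $s$ to $w$ contains $u$; the dominator tree $D(s)$ is the rooted tree on $V$ with root $s$ in which $u$ is an ancestor of $w$ iff $u$ dominates $w$; $d(w)$ is the parent of $w\neq s$. An edge $(u,w)$ is a bridge of $G(s)$ if every path from $s$ to $w$ contains it (then $u=d(w)$). A vertex $w\neq s$ is marked if $(d(w),w)$ is a bridge. Deleting from $D(s)$ all edges $(d(w),w)$ with $w$ marked decomposes $D(s)$ into subtrees rooted at $s$ or at marked vertices; $T(v)$ is the subtree containing $v$. A vertex $x\in T(r)$ is a boundary vertex of $T(r)$ if $x$ has a marked child in $D(s)$. Auxiliary graph: for a subtree root $r$ that is not a leaf of $D(s)$, $G_r=(V_r,E_r)$ has ordinary vertices $V_r^o$ = the vertices of $T(r)$ and auxiliary vertices $V_r^a$ consisting of: a copy of each marked child $z$ of each boundary vertex $x$ of $T(r)$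 (with the edge $(x,z)$ in $E_r$), and, if $r\neq s$, a copy of $d(r)$ (with the edge $(d(r),r)$ in $E_r$). $E_r$ further contains all edges of $E$ with both endpoints in $T(r)$, plus the following shortcut edges, for each $(u,v)\in E$: (a) if $u\in T(r)$ and $v$ is not a descendant of $r$ in $D(s)$, the edge $(u,d(r))$; (b) if $v\in T(r)$ and $u$ is a descendant in $D(s)$ of a marked child $z$ of a boundary vertex of $T(r)$, the edge $(z,v)$; (c) if $u$ is a descendant in $D(s)$ of a marked child $z$ of a boundary vertex of $T(r)$ and $v$ is not a descendant of $r$ in $D(s)$, the edge $(z,d(r))$. Parallel duplicate edges are not kept. *)

theory Defs
  imports Main
begin

definition path_edges :: "'a list \<Rightarrow> ('a \<times> 'a) set" where
  "path_edges p = set (zip p (tl p))"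

definition dpath :: "('a \<times> 'a) set \<Rightarrow> 'a list \<Rightarrow> 'a \<Rightarrow> 'a \<Rightarrow> bool" where
  "dpath E p x y \<longleftrightarrow> p \<noteq> [] \<and> hd p = x \<and> last p = y \<and> distinct p
      \<and> path_edges p \<subseteq> E"

definition strongly_connected :: "'a set \<Rightarrow> ('a \<times> 'a) set \<Rightarrow> bool" where
  "strongly_connected V E \<longleftrightarrow> (\<forall>x\<in>V. \<forall>y\<in>V. \<exists>p. dpath E p x y)"

definition two_edge_paths :: "('a \<times> 'a) set \<Rightarrow> 'a \<Rightarrow> 'a \<Rightarrow> bool" where
  "two_edge_paths E x y \<longleftrightarrow>
     (\<exists>p q. dpath E p x y \<and> dpath E q x y \<and> path_edges p \<inter> path_edges q = {})"

definition two_edge_equiv :: "('a \<times> 'a) set \<Rightarrow> 'a \<Rightarrow> 'a \<Rightarrow> bool" where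
  "two_edge_equiv E x y \<longleftrightarrow> x = y \<or> (two_edge_paths E x y \<and> two_edge_paths E y x)"

definition dominates :: "('a \<times> 'a) set \<Rightarrow> 'a \<Rightarrow> 'a \<Rightarrow> 'a \<Rightarrow> bool" where
  "dominates E s u w \<longleftrightarrow> (\<forall>p. dpath E p s w \<longrightarrow> u \<in> set p)"

definition idom :: "('a \<times> 'a) set \<Rightarrow> 'a \<Rightarrow> 'a \<Rightarrow> 'a" where
  "idom E s w = (THE u. u \<noteq> w \<and> dominates E s u w \<and>
      (\<forall>u'. u' \<noteq> w \<and> dominates E s u' w \<longrightarrow> dominates E s u' u))"

definition is_bridge :: "('a \<times> 'a) set \<Rightarrow> 'a \<Rightarrow> 'a \<Rightarrow> 'a \<Rightarrow> bool" where
  "is_bridge E s u w \<longleftrightarrow> (u, w) \<in> E \<and> (\<forall>p. dpath E p s w \<longrightarrow> (u, w) \<in> path_edges p)"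

definition marked :: "'a set \<Rightarrow> ('a \<times> 'a) set \<Rightarrow> 'a \<Rightarrow> 'a \<Rightarrow> bool" where
  "marked V E s w \<longleftrightarrow> w \<in> V \<and> w \<noteq> s \<and> is_bridge E s (idom E s w) w"

definition subtree_root :: "'a set \<Rightarrow> ('a \<times> 'a) set \<Rightarrow> 'a \<Rightarrow> 'a \<Rightarrow> bool" where
  "subtree_root V E s r \<longleftrightarrow> r = s \<or> marked V E s r"

definition subtree :: "'a set \<Rightarrow> ('a \<times> 'a) set \<Rightarrow> 'a \<Rightarrow> 'a \<Rightarrow> 'a set" where
  "subtree V E s r = {v \<in> V. dominates E s r v \<and>
      (\<forall>x. x \<noteq> r \<and> dominates E s r x \<and> dominates E s x v \<longrightarrow> \<not> marked V E s x)}"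

definition boundary_children :: "'a set \<Rightarrow> ('a \<times> 'a) set \<Rightarrow> 'a \<Rightarrow> 'a \<Rightarrow> 'a set" where
  "boundary_children V E s r = {z. marked V E s z \<and> idom E s z \<in> subtree V E s r}"

text \<open>Auxiliary graph G_r. Auxiliary vertices are represented by the original
vertices they are copies of (they are distinct from T(r) and from each other).\<close>
definition aux_vertices :: "'a set \<Rightarrow> ('a \<times> 'a) set \<Rightarrow> 'a \<Rightarrow> 'a \<Rightarrow> 'a set" where
  "aux_vertices V E s r = subtree V E s r \<union> boundary_children V E s r
      \<union> (if r \<noteq> s then {idom E s r} else {})"

definition aux_edges :: "'a set \<Rightarrow> ('a \<times> 'a) set \<Rightarrow> 'a \<Rightarrow> 'a \<Rightarrow> ('a \<times> 'a) set" where
  "aux_edges V E s r =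
     {(x, z). z \<in> boundary_children V E s r \<and> x = idom E s z}
   \<union> (if r \<noteq> s then {(idom E s r, r)} else {})
   \<union> {(u, v). (u, v) \<in> E \<and> u \<in> subtree V E s r \<and> v \<in> subtree V E s r}
   \<union> {(u, d). \<exists>v. (u, v) \<in> E \<and> u \<in> subtree V E s r \<and> \<not> dominates E s r v
                 \<and> d = idom E s r}
   \<union> {(z, v). \<exists>u. (u, v) \<in> E \<and> v \<in> subtree V E s r
                 \<and> z \<in> boundary_children V E s r \<and> dominates E s z u}
   \<union> {(z, d). \<exists>u v. (u, v) \<in> E \<and> z \<in> boundary_children V E s r
                 \<and> dominates E s z u \<and> \<not> dominates E s r v \<and> d = idom E s r}"

end

theory Submission
  imports Defs
begin

text \<open>Contract \<open>G\<close> onto \<open>G\<^sub>r\<close>: keep the vertices of \<open>T(r)\<close>, send every vertex below a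
  boundary child \<open>z\<close> (in \<open>D(s)\<close>) to \<open>z\<close> and every other vertex to \<open>d(r)\<close>. Each edge of \<open>G\<close>
  becomes a loop or an edge of \<open>G\<^sub>r\<close>, and each edge of \<open>G\<^sub>r\<close> lifts to a walk of \<open>G\<close> whose
  remaining edges are loops at an auxiliary end point. The region below a marked vertex \<open>z\<close> can
  only be entered through the bridge \<open>(d(z), z)\<close>, so two paths between vertices of \<open>T(r)\<close> that
  both meet the region of an auxiliary vertex share its bridge, in \<open>G\<close> as well as in \<open>G\<^sub>r\<close>.
  Hence edge-disjointness transfers in both directions. Vertices in different subtrees are
  separated by the bridge entering the deeper subtree, so they are never 2-edge-connected.\<close>

section \<open>Walks and paths\<close>

lemma path_edges_Nil [simp]: "path_edges [] = {}"
  by (simp add: path_edges_def)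

lemma path_edges_singleton [simp]: "path_edges [x] = {}"
  by (simp add: path_edges_def)

lemma path_edges_Cons_Cons [simp]: "path_edges (x # y # xs) = insert (x, y) (path_edges (y # xs))"
  by (simp add: path_edges_def)

lemma path_edges_Cons: "xs \<noteq> [] \<Longrightarrow> path_edges (x # xs) = insert (x, hd xs) (path_edges xs)"
  by (cases xs) auto

lemma path_edges_append:
  "path_edges (xs @ ys) = path_edges xs \<union> path_edges ys \<union>
     (if xs \<noteq> [] \<and> ys \<noteq> [] then {(last xs, hd ys)} else {})"
  by (induction xs rule: induct_list012) (auto simp: path_edges_Cons split: if_splits)

lemma path_edges_append_subset: "path_edges xs \<union> path_edges ys \<subseteq> path_edges (xs @ ys)"
  by (auto simp: path_edges_append)

lemma path_edges_glue:
  "xs \<noteq> [] \<Longrightarrow> ys \<noteq> [] \<Longrightarrow> last xs = hd ys \<Longrightarrow>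
   path_edges (xs @ tl ys) = path_edges xs \<union> path_edges ys"
  by (cases ys; cases "tl ys") (auto simp: path_edges_append)

lemma path_edges_memD: "(a, b) \<in> path_edges p \<Longrightarrow> a \<in> set p \<and> b \<in> set (tl p)"
  unfolding path_edges_def by (auto dest: set_zip_leftD set_zip_rightD)

lemma path_edges_memD': "(a, b) \<in> path_edges p \<Longrightarrow> a \<in> set p \<and> b \<in> set p"
  using path_edges_memD[of a b p] by (cases p) auto

lemma path_edges_iff_split: "(a, b) \<in> path_edges p \<longleftrightarrow> (\<exists>p1 p2. p = p1 @ a # b # p2)"
proof
  show "(a, b) \<in> path_edges p \<Longrightarrow> \<exists>p1 p2. p = p1 @ a # b # p2"
  proof (induction p rule: induct_list012)
    case (3 x y p)
    show ?case
    proof (cases "(a, b) = (x, y)")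
      case True
      then show ?thesis by blast
    next
      case False
      then obtain p1 p2 where "y # p = p1 @ a # b # p2" using 3 by auto
      then have "x # y # p = (x # p1) @ a # b # p2" by simp
      then show ?thesis by blast
    qed
  qed auto
qed (auto simp: path_edges_append)

lemma path_edges_distinct_neq: "distinct p \<Longrightarrow> (a, b) \<in> path_edges p \<Longrightarrow> a \<noteq> b"
  by (auto simp: path_edges_iff_split)

lemma set_subset_hd_snd_path_edges: "p \<noteq> [] \<Longrightarrow> set p \<subseteq> insert (hd p) (snd ` path_edges p)"
  by (induction p rule: induct_list012) force+

lemma set_subset_last_fst_path_edges: "p \<noteq> [] \<Longrightarrow> set p \<subseteq> insert (last p) (fst ` path_edges p)"
  by (induction p rule: induct_list012) force+

lemma path_edges_map: "path_edges (map f p) = map_prod f f ` path_edges p"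
  unfolding path_edges_def by (simp add: map_tl[symmetric] zip_map_map map_prod_def)

lemma path_edges_remdups_adj: "path_edges (remdups_adj xs) \<subseteq> {(a, b) \<in> path_edges xs. a \<noteq> b}"
proof (induction xs rule: remdups_adj.induct)
  case (3 x y xs)
  then show ?case by (auto simp: path_edges_Cons)
qed auto

definition walk :: "('a \<times> 'a) set \<Rightarrow> 'a list \<Rightarrow> 'a \<Rightarrow> 'a \<Rightarrow> bool" where
  "walk E p x y \<longleftrightarrow> p \<noteq> [] \<and> hd p = x \<and> last p = y \<and> path_edges p \<subseteq> E"

lemma walk_singleton: "walk E [x] x x"
  by (simp add: walk_def)

lemma dpath_imp_walk: "dpath E p x y \<Longrightarrow> walk E p x y"
  by (simp add: dpath_def walk_def)

lemma walk_shorten_to_dpath: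
  "walk E p x y \<Longrightarrow> \<exists>q. dpath E q x y \<and> set q \<subseteq> set p \<and> path_edges q \<subseteq> path_edges p"
proof (induction "length p" arbitrary: p rule: less_induct)
  case less
  show ?case
  proof (cases "distinct p")
    case True
    then show ?thesis using less.prems by (auto simp: walk_def dpath_def)
  next
    case False
    then obtain xs u ys zs where p: "p = xs @ [u] @ ys @ [u] @ zs"
      using not_distinct_decomp by blast
    define p' where "p' = (xs @ [u]) @ tl (u # zs)"
    have "path_edges p' = path_edges (xs @ [u]) \<union> path_edges (u # zs)"
      unfolding p'_def by (rule path_edges_glue) auto
    also have "\<dots> \<subseteq> path_edges p"
      using path_edges_append_subset[of "xs @ [u]" "ys @ u # zs"]
        path_edges_append_subset[of ys "u # zs"] by (auto simp: p)
    finally have edges: "path_edges p' \<subseteq> path_edges p" .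
    then have "walk E p' x y"
      using less.prems by (cases xs; cases zs) (auto simp: walk_def p'_def p)
    moreover have "length p' < length p" "set p' \<subseteq> set p"
      by (auto simp: p p'_def)
    ultimately show ?thesis using less edges by blast
  qed
qed

lemma dpath_prefix: "dpath E p x y \<Longrightarrow> p = p1 @ u # p2 \<Longrightarrow> dpath E (p1 @ [u]) x u"
  using path_edges_append_subset[of "p1 @ [u]" p2] unfolding dpath_def by (cases p1) auto

lemma path_edge_entering_after_hd:
  "p \<noteq> [] \<Longrightarrow> \<not> P (hd p) \<Longrightarrow> y \<in> set p \<Longrightarrow> P y \<Longrightarrow> \<exists>a b. (a, b) \<in> path_edges p \<and> \<not> P a \<and> P b"
  by (induction p rule: induct_list012) auto

lemma path_edge_entering_before_last:
  assumes "p \<noteq> []" "P (last p)" "y \<in> set p" "\<not> P y"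
  shows "\<exists>a b. (a, b) \<in> path_edges p \<and> \<not> P a \<and> P b"
proof -
  obtain p1 p2 where p: "p = p1 @ y # p2"
    using assms(3) by (meson split_list)
  then have "P (last (y # p2))"
    using assms(2) by (simp add: last_append)
  moreover have "last (y # p2) \<in> set (y # p2)"
    by (rule last_in_set) simp
  ultimately obtain a b where "(a, b) \<in> path_edges (y # p2)" "\<not> P a" "P b"
    using path_edge_entering_after_hd[of "y # p2" P "last (y # p2)"] assms(4) by auto
  then show ?thesis
    using path_edges_append_subset[of p1 "y # p2"] p by blast
qed

fun splice_walks :: "('a \<times> 'a \<Rightarrow> 'a list) \<Rightarrow> 'a list \<Rightarrow> 'a list" where
  "splice_walks W [] = []"
| "splice_walks W [x] = [x]"
| "splice_walks W (x # y # xs) = W (x, y) @ tl (splice_walks W (y # xs))"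

lemma walk_splice_walks:
  assumes "P \<noteq> []" and "\<And>e. e \<in> path_edges P \<Longrightarrow> walk E (W e) (fst e) (snd e)"
  shows "walk E (splice_walks W P) (hd P) (last P)
    \<and> path_edges (splice_walks W P) \<subseteq> (\<Union>e\<in>path_edges P. path_edges (W e))"
  using assms
proof (induction W P rule: splice_walks.induct)
  case (3 W x y xs)
  define R where "R = splice_walks W (y # xs)"
  have IH: "walk E R y (last (y # xs)) \<and> path_edges R \<subseteq> (\<Union>e\<in>path_edges (y # xs). path_edges (W e))"
    using 3 unfolding R_def by auto
  have w: "walk E (W (x, y)) x y"
    using 3(3) by auto
  have edges: "path_edges (W (x, y) @ tl R) = path_edges (W (x, y)) \<union> path_edges R"
    using path_edges_glue IH w unfolding walk_def by metis
  have "last (W (x, y) @ tl R) = last (x # y # xs)"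
  proof (cases "tl R = []")
    case True
    then have "R = [y]"
      using IH unfolding walk_def by (cases R) auto
    then show ?thesis
      using IH w True unfolding walk_def by auto
  next
    case False
    then show ?thesis
      using IH unfolding walk_def by (cases R) auto
  qed
  then show ?case
    using IH w edges unfolding R_def walk_def by auto
qed (auto simp: walk_def)

section \<open>Dominators in a flow graph\<close>

locale flow_graph =
  fixes V :: "'a set" and E :: "('a \<times> 'a) set" and s :: 'a
  assumes edges_subset: "E \<subseteq> V \<times> V"
    and root_in_V: "s \<in> V"
    and reachable_from_root: "x \<in> V \<Longrightarrow> \<exists>p. dpath E p s x"
begin

abbreviation D :: "'a \<Rightarrow> 'a \<Rightarrow> bool" where
  "D \<equiv> dominates E s"

lemma walk_set_subset_V: "walk E p x y \<Longrightarrow> x \<in> V \<Longrightarrow> set p \<subseteq> V"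
  using set_subset_hd_snd_path_edges[of p] edges_subset unfolding walk_def by fastforce

lemma dpath_set_subset_V: "dpath E p x y \<Longrightarrow> x \<in> V \<Longrightarrow> set p \<subseteq> V"
  using walk_set_subset_V dpath_imp_walk by metis

lemma dominates_refl: "D a a"
  unfolding dominates_def dpath_def by auto

lemma root_dominates: "D s a"
  unfolding dominates_def dpath_def by (auto intro: hd_in_set)

lemma not_dominatesE:
  assumes "\<not> D u w"
  obtains p where "dpath E p s w" "u \<notin> set p"
  using assms unfolding dominates_def by auto

lemma walk_avoiding_imp_not_dominates: "walk E p s w \<Longrightarrow> u \<notin> set p \<Longrightarrow> \<not> D u w"
  using walk_shorten_to_dpath[of E p s w] unfolding dominates_def by auto

lemma dominator_in_V: "D a b \<Longrightarrow> b \<in> V \<Longrightarrow> a \<in> V"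
  using reachable_from_root dpath_set_subset_V[OF _ root_in_V] unfolding dominates_def by blast

lemma dominates_trans: "D a b \<Longrightarrow> D b c \<Longrightarrow> D a c"
proof (unfold dominates_def, intro allI impI)
  fix p assume ab: "\<forall>p. dpath E p s b \<longrightarrow> a \<in> set p"
    and bc: "\<forall>p. dpath E p s c \<longrightarrow> b \<in> set p" and p: "dpath E p s c"
  then obtain p1 p2 where pp: "p = p1 @ b # p2"
    by (meson split_list)
  have "a \<in> set (p1 @ [b])"
    using ab dpath_prefix[OF p pp] by blast
  then show "a \<in> set p"
    using pp by auto
qed

lemma dominates_antisym: "D a b \<Longrightarrow> D b a \<Longrightarrow> b \<in> V \<Longrightarrow> a = b"
proof -
  assume ab: "D a b" and ba: "D b a" and "b \<in> V"
  obtain p where p: "dpath E p s b"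
    using reachable_from_root \<open>b \<in> V\<close> by blast
  then have "a \<in> set p"
    using ab unfolding dominates_def by blast
  then obtain p1 p2 where pp: "p = p1 @ a # p2"
    by (meson split_list)
  have "dpath E (p1 @ [a]) s a"
    using p pp by (rule dpath_prefix)
  then have "b \<in> set (p1 @ [a])"
    using ba unfolding dominates_def by blast
  moreover have "b \<in> set (a # p2)"
    using p pp unfolding dpath_def by (metis last_appendR last_in_set list.distinct(1))
  moreover have "distinct p"
    using p unfolding dpath_def by auto
  ultimately show "a = b"
    using pp by auto
qed

lemma dominates_earlier_on_path:
  assumes p: "dpath E (p1 @ b # p2) s y" and a: "a \<in> set p1" "D a y"
  shows "D a b"
proof (rule ccontr)
  assume "\<not> D a b"
  then obtain q where q: "dpath E q s b" "a \<notin> set q"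
    by (rule not_dominatesE)
  have "path_edges (q @ tl (b # p2)) = path_edges q \<union> path_edges (b # p2)"
    using q by (intro path_edges_glue) (auto simp: dpath_def)
  moreover have "path_edges (b # p2) \<subseteq> path_edges (p1 @ b # p2)"
    using path_edges_append_subset by blast
  ultimately have "walk E (q @ tl (b # p2)) s y"
    using p q unfolding dpath_def walk_def by (cases p2) auto
  moreover have "a \<notin> set (q @ tl (b # p2))"
    using p q a unfolding dpath_def by auto
  ultimately show False
    using walk_avoiding_imp_not_dominates a by blast
qed

lemma dominates_linear: "D a y \<Longrightarrow> D b y \<Longrightarrow> y \<in> V \<Longrightarrow> D a b \<or> D b a"
proof -
  assume a_y: "D a y" and b_y: "D b y" and "y \<in> V"
  then obtain p where p: "dpath E p s y"
    using reachable_from_root by blast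
  then have "b \<in> set p" "a \<in> set p"
    using a_y b_y unfolding dominates_def by blast+
  then obtain p1 p2 where pp: "p = p1 @ b # p2"
    by (meson split_list)
  consider "a \<in> set p1" | "a = b" | "a \<in> set p2"
    using \<open>a \<in> set p\<close> pp by auto
  then show ?thesis
  proof cases
    case 1
    then show ?thesis using dominates_earlier_on_path p pp a_y by blast
  next
    case 2
    then show ?thesis using dominates_refl by auto
  next
    case 3
    then obtain r1 r2 where "p = (p1 @ b # r1) @ a # r2"
      using pp by (auto dest: split_list)
    then show ?thesis
      using dominates_earlier_on_path[of "p1 @ b # r1" a r2 y b] p b_y by auto
  qed
qed

lemma finite_dominators:
  assumes "x \<in> V"
  shows "finite {y. D y x}"
proof -
  obtain p where "dpath E p s x"
    using reachable_from_root assms by blast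
  then have "{y. D y x} \<subseteq> set p"
    unfolding dominates_def by blast
  then show ?thesis
    by (rule finite_subset) simp
qed

lemma card_dominators_strict_mono:
  assumes "D x y" "x \<noteq> y" "y \<in> V"
  shows "card {z. D z x} < card {z. D z y}"
proof (rule psubset_card_mono)
  show "finite {z. D z y}"
    using finite_dominators assms(3) .
  have "y \<notin> {z. D z x}"
    using dominates_antisym assms by blast
  then show "{z. D z x} \<subset> {z. D z y}"
    using dominates_trans[OF _ assms(1)] dominates_refl by blast
qed

lemma exists_dominance_minimal:
  assumes "x \<in> M" "M \<subseteq> V"
  obtains m where "m \<in> M" "\<And>y. y \<in> M \<Longrightarrow> D y m \<Longrightarrow> y = m"
proof -
  obtain m where m: "m \<in> M" and least: "\<And>y. y \<in> M \<Longrightarrow> card {z. D z m} \<le> card {z. D z y}"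
    using ex_has_least_nat[of "\<lambda>x. x \<in> M" x "\<lambda>x. card {z. D z x}"] assms(1) by blast
  show ?thesis
  proof (rule that[OF m])
    fix y assume y: "y \<in> M" "D y m"
    show "y = m"
    proof (rule ccontr)
      assume "y \<noteq> m"
      then have "card {z. D z y} < card {z. D z m}"
        using card_dominators_strict_mono y m assms(2) by blast
      then show False
        using least[OF y(1)] by simp
    qed
  qed
qed

lemma exists_dominance_maximal:
  assumes "x \<in> M" "M \<subseteq> {y. D y v}" "v \<in> V"
  obtains m where "m \<in> M" "\<And>y. y \<in> M \<Longrightarrow> D m y \<Longrightarrow> y = m"
proof -
  have "card {z. D z y} < Suc (card {z. D z v})" if "y \<in> M" for y
  proof -
    have "{z. D z y} \<subseteq> {z. D z v}"
      using that assms(2) dominates_trans by blast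
    then show ?thesis
      using card_mono[OF finite_dominators[OF assms(3)]] by (simp add: le_imp_less_Suc)
  qed
  then obtain m where m: "m \<in> M" and greatest: "\<And>y. y \<in> M \<Longrightarrow> card {z. D z y} \<le> card {z. D z m}"
    using ex_has_greatest_nat[of "\<lambda>x. x \<in> M" x "\<lambda>x. card {z. D z x}"] assms(1) by blast
  show ?thesis
  proof (rule that[OF m])
    fix y assume y: "y \<in> M" "D m y"
    show "y = m"
    proof (rule ccontr)
      assume "y \<noteq> m"
      have "D y v"
        using y(1) assms(2) by blast
      then have "y \<in> V"
        using dominator_in_V assms(3) by blast
      then have "card {z. D z m} < card {z. D z y}"
        using card_dominators_strict_mono[OF y(2)] \<open>y \<noteq> m\<close> by simp
      then show False
        using greatest[OF y(1)] by simp
    qed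
  qed
qed

lemma edge_into_dominated_region: "(a, b) \<in> E \<Longrightarrow> D z b \<Longrightarrow> \<not> D z a \<Longrightarrow> b = z"
proof (rule ccontr)
  assume ab: "(a, b) \<in> E" "D z b" "\<not> D z a" "b \<noteq> z"
  obtain q where q: "dpath E q s a" "z \<notin> set q"
    using ab(3) by (rule not_dominatesE)
  have "walk E (q @ [b]) s b"
    using q ab unfolding dpath_def walk_def by (auto simp: path_edges_append)
  moreover have "z \<notin> set (q @ [b])"
    using q ab by auto
  ultimately show False
    using walk_avoiding_imp_not_dominates ab by blast
qed

lemma markedD: "marked V E s z \<Longrightarrow> z \<in> V \<and> z \<noteq> s \<and> (idom E s z, z) \<in> E \<and> idom E s z \<in> V"
  using edges_subset unfolding marked_def is_bridge_def by auto

lemma marked_bridge_on_dpath: "marked V E s z \<Longrightarrow> dpath E p s z \<Longrightarrow> (idom E s z, z) \<in> path_edges p"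
  unfolding marked_def is_bridge_def by auto

lemma marked_entering_edge: "marked V E s z \<Longrightarrow> (a, z) \<in> E \<Longrightarrow> \<not> D z a \<Longrightarrow> a = idom E s z"
proof -
  assume m: "marked V E s z" and e: "(a, z) \<in> E" and "\<not> D z a"
  then obtain q where q: "dpath E q s a" "z \<notin> set q"
    by (auto elim: not_dominatesE)
  have "dpath E (q @ [z]) s z"
    using q e unfolding dpath_def by (auto simp: path_edges_append)
  then have "(idom E s z, z) \<in> path_edges (q @ [z])"
    by (rule marked_bridge_on_dpath[OF m])
  then have "(idom E s z, z) \<in> path_edges q \<or> (idom E s z, z) = (a, z)"
    using q unfolding dpath_def by (auto simp: path_edges_append)
  then show ?thesis
    using q path_edges_memD' by fastforce
qed

lemma idom_dominates_marked: "marked V E s z \<Longrightarrow> D (idom E s z) z"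
  unfolding dominates_def using marked_bridge_on_dpath path_edges_memD' by fastforce

lemma marked_not_dominates_idom: "marked V E s z \<Longrightarrow> \<not> D z (idom E s z)"
proof -
  assume m: "marked V E s z"
  obtain p where p: "dpath E p s z"
    using reachable_from_root markedD m by blast
  then obtain p1 p2 where pp: "p = p1 @ idom E s z # z # p2"
    using marked_bridge_on_dpath m path_edges_iff_split by metis
  have "dpath E (p1 @ [idom E s z]) s (idom E s z)"
    using p pp by (rule dpath_prefix)
  moreover have "z \<notin> set (p1 @ [idom E s z])"
    using p pp unfolding dpath_def by auto
  ultimately show ?thesis
    unfolding dominates_def by blast
qed

lemma strict_dominator_dominates_idom:
  assumes m: "marked V E s z" and xz: "D x z" "x \<noteq> z"
  shows "D x (idom E s z)"
proof (unfold dominates_def, intro allI impI)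
  fix q assume q: "dpath E q s (idom E s z)"
  show "x \<in> set q"
  proof (cases "z \<in> set q")
    case True
    then obtain q1 q2 where qq: "q = q1 @ z # q2"
      by (meson split_list)
    have "(idom E s z, z) \<in> path_edges (q1 @ [z])"
      using marked_bridge_on_dpath[OF m dpath_prefix[OF q qq]] .
    moreover have "distinct (q1 @ [z])"
      using q qq unfolding dpath_def by auto
    ultimately have "idom E s z \<in> set q1"
      using path_edges_memD path_edges_distinct_neq by fastforce
    moreover have "idom E s z \<in> set (z # q2)"
      using q qq unfolding dpath_def by (metis last_appendR last_in_set list.distinct(1))
    ultimately show ?thesis
      using q qq unfolding dpath_def by auto
  next
    case False
    then have "dpath E (q @ [z]) s z"
      using q markedD[OF m] unfolding dpath_def by (auto simp: path_edges_append)
    then show ?thesis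
      using xz unfolding dominates_def by auto
  qed
qed

lemma marked_bridge_separates:
  assumes m: "marked V E s z" and "D z y" "\<not> D z x" and p: "dpath E p x y"
  shows "(idom E s z, z) \<in> path_edges p"
proof -
  obtain a b where ab: "(a, b) \<in> path_edges p" "\<not> D z a" "D z b"
    using path_edge_entering_after_hd[of p "D z" y] assms unfolding dpath_def by auto
  then have "(a, b) \<in> E"
    using p unfolding dpath_def by auto
  then have "b = z"
    using edge_into_dominated_region ab by auto
  then have "a = idom E s z"
    using marked_entering_edge m ab \<open>(a, b) \<in> E\<close> by auto
  then show ?thesis
    using ab \<open>b = z\<close> by simp
qed

lemma exists_subtree_root:
  assumes "v \<in> V"
  obtains r where "subtree_root V E s r" "v \<in> subtree V E s r"
proof -
  let ?M = "{x. subtree_root V E s x \<and> D x v}"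
  have "s \<in> ?M"
    unfolding subtree_root_def using root_dominates by blast
  then obtain r where r: "r \<in> ?M" and deepest: "\<And>y. y \<in> ?M \<Longrightarrow> D r y \<Longrightarrow> y = r"
    using exists_dominance_maximal[of s ?M v] assms by blast
  have "\<not> marked V E s x" if "x \<noteq> r" "D r x" "D x v" for x
    using deepest[of x] that unfolding subtree_root_def by blast
  then have "v \<in> subtree V E s r"
    unfolding subtree_def using r assms by blast
  then show ?thesis
    using that r by blast
qed

end

section \<open>The subtrees \<open>T(r)\<close> and the contraction onto \<open>G\<^sub>r\<close>\<close>

locale subtree_context = flow_graph +
  fixes r :: 'a
  assumes subtree_root: "subtree_root V E s r"
begin

abbreviation T :: "'a set" where
  "T \<equiv> subtree V E s r"

abbreviation BC :: "'a set" where
  "BC \<equiv> boundary_children V E s r"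

lemma subtree_iff:
  "v \<in> T \<longleftrightarrow> v \<in> V \<and> D r v \<and> (\<forall>x. x \<noteq> r \<and> D r x \<and> D x v \<longrightarrow> \<not> marked V E s x)"
  unfolding subtree_def by (simp only: mem_Collect_eq)

lemma not_in_subtree_below_marked: "x \<noteq> r \<Longrightarrow> D r x \<Longrightarrow> D x v \<Longrightarrow> marked V E s x \<Longrightarrow> v \<notin> T"
  unfolding subtree_iff by blast

lemma boundary_children_iff: "z \<in> BC \<longleftrightarrow> marked V E s z \<and> idom E s z \<in> T"
  unfolding boundary_children_def by auto

lemma r_in_V: "r \<in> V"
  using subtree_root root_in_V markedD unfolding subtree_root_def by auto

lemma r_marked: "r \<noteq> s \<Longrightarrow> marked V E s r"
  using subtree_root unfolding subtree_root_def by auto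

lemma r_in_subtree: "r \<in> T"
  unfolding subtree_iff using r_in_V dominates_refl dominates_antisym[OF _ _ r_in_V] by auto

lemma subtree_subset_V: "v \<in> T \<Longrightarrow> v \<in> V"
  using subtree_iff by auto

lemma r_dominates_subtree: "v \<in> T \<Longrightarrow> D r v"
  using subtree_iff by auto

lemma boundary_childD:
  assumes "z \<in> BC"
  shows "marked V E s z" "idom E s z \<in> T" "D r z" "z \<noteq> r" "z \<notin> T" "z \<in> V"
proof -
  show m: "marked V E s z" and i: "idom E s z \<in> T"
    using assms boundary_children_iff by auto
  show d: "D r z"
    using r_dominates_subtree[OF i] idom_dominates_marked[OF m] dominates_trans by blast
  show ne: "z \<noteq> r"
    using marked_not_dominates_idom[OF m] r_dominates_subtree[OF i] by auto
  show "z \<in> V"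
    using markedD m by auto
  show "z \<notin> T"
    using not_in_subtree_below_marked[OF ne d dominates_refl m] .
qed

lemma boundary_child_not_dominates_subtree: "z \<in> BC \<Longrightarrow> v \<in> T \<Longrightarrow> \<not> D z v"
  using boundary_childD(1,3,4) not_in_subtree_below_marked by metis

lemma parent_of_rootD:
  assumes "r \<noteq> s"
  shows "\<not> D r (idom E s r)" "idom E s r \<notin> T" "idom E s r \<notin> BC" "idom E s r \<in> V"
proof -
  show n: "\<not> D r (idom E s r)"
    using marked_not_dominates_idom r_marked assms by auto
  then show "idom E s r \<notin> T"
    using r_dominates_subtree by auto
  show "idom E s r \<notin> BC"
    using n boundary_childD(3) by auto
  show "idom E s r \<in> V"
    using markedD r_marked assms by auto
qed

lemma boundary_children_incomparable:
  assumes z1: "z1 \<in> BC" and z2: "z2 \<in> BC" and d: "D z1 z2"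
  shows "z1 = z2"
proof (rule ccontr)
  assume "z1 \<noteq> z2"
  then have "D z1 (idom E s z2)"
    using strict_dominator_dominates_idom boundary_childD(1)[OF z2] d by blast
  then show False
    using boundary_childD(2)[OF z2] not_in_subtree_below_marked boundary_childD(1,3,4)[OF z1] by metis
qed

lemma boundary_child_unique: "z1 \<in> BC \<Longrightarrow> z2 \<in> BC \<Longrightarrow> D z1 a \<Longrightarrow> D z2 a \<Longrightarrow> a \<in> V \<Longrightarrow> z1 = z2"
  using dominates_linear boundary_children_incomparable by metis

text \<open>Every descendant of \<open>r\<close> outside \<open>T(r)\<close> lies below the highest marked vertex on its
  tree path from \<open>r\<close>, and that vertex is a boundary child.\<close>

lemma boundary_child_exists:
  assumes aV: "a \<in> V" and ra: "D r a" and aT: "a \<notin> T"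
  obtains z where "z \<in> BC" "D z a"
proof -
  define M where "M = {x. marked V E s x \<and> x \<noteq> r \<and> D r x \<and> D x a}"
  obtain x1 where x1: "x1 \<in> M"
    using aV ra aT unfolding subtree_iff M_def by auto
  have "M \<subseteq> V"
    unfolding M_def using markedD by auto
  then obtain z where z: "z \<in> M" and highest: "\<And>y. y \<in> M \<Longrightarrow> D y z \<Longrightarrow> y = z"
    using exists_dominance_minimal[OF x1] by blast
  have mz: "marked V E s z"
    using z M_def by auto
  have "idom E s z \<in> T"
    unfolding subtree_iff
  proof (intro conjI allI impI)
    show "idom E s z \<in> V"
      using markedD mz by auto
    show "D r (idom E s z)"
      using strict_dominator_dominates_idom mz z M_def by auto
    fix x assume x: "x \<noteq> r \<and> D r x \<and> D x (idom E s z)"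
    show "\<not> marked V E s x"
    proof
      assume mx: "marked V E s x"
      have "D x z"
        using x idom_dominates_marked[OF mz] dominates_trans by blast
      moreover have "x \<noteq> z"
        using x marked_not_dominates_idom[OF mz] by auto
      moreover have "x \<in> M"
        using M_def mx x \<open>D x z\<close> z dominates_trans by auto
      ultimately show False
        using highest by auto
    qed
  qed
  then show ?thesis
    using that mz z M_def boundary_children_iff by auto
qed

definition contract :: "'a \<Rightarrow> 'a" where
  "contract a = (if a \<in> T then a else if D r a then (SOME z. z \<in> BC \<and> D z a) else idom E s r)"

lemma contract_subtree: "a \<in> T \<Longrightarrow> contract a = a"
  unfolding contract_def by auto

lemma contract_below_boundary_child:
  assumes "a \<in> V" "z \<in> BC" "D z a"
  shows "contract a = z"
proof -
  have "a \<notin> T"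
    using assms boundary_child_not_dominates_subtree by blast
  moreover have "D r a"
    using assms boundary_childD(3) dominates_trans by blast
  moreover have "(SOME z. z \<in> BC \<and> D z a) = z"
    using someI[of "\<lambda>z. z \<in> BC \<and> D z a" z] assms boundary_child_unique by blast
  ultimately show ?thesis
    unfolding contract_def by auto
qed

lemma contract_outside: "\<not> D r a \<Longrightarrow> contract a = idom E s r"
  unfolding contract_def using r_dominates_subtree by auto

lemma contract_cases [consumes 1]:
  assumes "a \<in> V"
  obtains (subtree) "a \<in> T" "contract a = a"
  | (below) z where "z \<in> BC" "D z a" "contract a = z" "a \<notin> T" "D r a"
  | (outside) "\<not> D r a" "r \<noteq> s" "contract a = idom E s r" "a \<notin> T"
proof -
  consider "a \<in> T" | "a \<notin> T" "D r a" | "\<not> D r a"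
    by blast
  then show ?thesis
  proof cases
    case 1
    then show ?thesis using that contract_subtree by blast
  next
    case 2
    then obtain z where "z \<in> BC" "D z a"
      using boundary_child_exists assms by blast
    then show ?thesis
      using that contract_below_boundary_child assms 2 by blast
  next
    case 3
    then show ?thesis
      using that contract_outside root_dominates r_dominates_subtree by blast
  qed
qed

lemma contract_in_subtree_iff: "a \<in> V \<Longrightarrow> contract a \<in> T \<longleftrightarrow> a \<in> T"
  by (cases a rule: contract_cases) (auto simp: boundary_childD parent_of_rootD)

end

context subtree_context
begin

abbreviation AE :: "('a \<times> 'a) set" where
  "AE \<equiv> aux_edges V E s r"

lemma aux_edge_to_boundary_child: "z \<in> BC \<Longrightarrow> (idom E s z, z) \<in> AE"
  unfolding aux_edges_def by auto

lemma aux_edge_into_r: "r \<noteq> s \<Longrightarrow> (idom E s r, r) \<in> AE"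
  unfolding aux_edges_def by auto

lemma aux_edge_inside: "(u, v) \<in> E \<Longrightarrow> u \<in> T \<Longrightarrow> v \<in> T \<Longrightarrow> (u, v) \<in> AE"
  unfolding aux_edges_def by auto

lemma aux_edge_leaving: "(u, v) \<in> E \<Longrightarrow> u \<in> T \<Longrightarrow> \<not> D r v \<Longrightarrow> (u, idom E s r) \<in> AE"
  unfolding aux_edges_def by blast

lemma aux_edge_from_below: "(u, v) \<in> E \<Longrightarrow> v \<in> T \<Longrightarrow> z \<in> BC \<Longrightarrow> D z u \<Longrightarrow> (z, v) \<in> AE"
  unfolding aux_edges_def by blast

lemma aux_edge_from_below_leaving:
  "(u, v) \<in> E \<Longrightarrow> z \<in> BC \<Longrightarrow> D z u \<Longrightarrow> \<not> D r v \<Longrightarrow> (z, idom E s r) \<in> AE"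
  unfolding aux_edges_def by blast

lemma aux_edgesE [consumes 1]:
  assumes "(c, d) \<in> AE"
  obtains (to_boundary_child) "d \<in> BC" "c = idom E s d"
  | (into_r) "r \<noteq> s" "c = idom E s r" "d = r"
  | (inside) "(c, d) \<in> E" "c \<in> T" "d \<in> T"
  | (leaving) v where "(c, v) \<in> E" "c \<in> T" "\<not> D r v" "d = idom E s r" "r \<noteq> s"
  | (from_below) u where "(u, d) \<in> E" "d \<in> T" "c \<in> BC" "D c u"
  | (from_below_leaving) u v where "(u, v) \<in> E" "c \<in> BC" "D c u" "\<not> D r v" "d = idom E s r" "r \<noteq> s"
proof -
  have "r \<noteq> s" if "\<not> D r v" for v
    using that root_dominates by auto
  then show ?thesis
    using assms that unfolding aux_edges_def by (auto split: if_splits)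
qed

lemma aux_edge_into_boundary_child: "(a, z) \<in> AE \<Longrightarrow> z \<in> BC \<Longrightarrow> a = idom E s z"
  by (erule aux_edgesE) (use boundary_childD r_in_subtree parent_of_rootD in auto)

lemma aux_edge_from_parent_of_r: "r \<noteq> s \<Longrightarrow> (idom E s r, b) \<in> AE \<Longrightarrow> b = r"
  by (erule aux_edgesE) (use boundary_childD parent_of_rootD in auto)

lemma aux_edge_endpoints:
  "(c, d) \<in> AE \<Longrightarrow> (c \<in> T \<or> c \<in> BC \<or> (r \<noteq> s \<and> c = idom E s r))
     \<and> (d \<in> T \<or> d \<in> BC \<or> (r \<noteq> s \<and> d = idom E s r))"
  by (erule aux_edgesE) (use boundary_childD r_in_subtree in auto)

lemma contract_edge_from_subtree:
  assumes ab: "(a, b) \<in> E" and "a \<in> T"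
  shows "(a, contract b) \<in> AE"
proof -
  have "b \<in> V"
    using ab edges_subset by auto
  then show ?thesis
  proof (cases rule: contract_cases)
    case subtree
    then show ?thesis
      using aux_edge_inside ab \<open>a \<in> T\<close> by auto
  next
    case (below z)
    have "\<not> D z a"
      using boundary_child_not_dominates_subtree below \<open>a \<in> T\<close> by auto
    then have "b = z"
      using edge_into_dominated_region ab below by auto
    then have "a = idom E s z"
      using marked_entering_edge ab boundary_childD(1) below \<open>\<not> D z a\<close> by auto
    then show ?thesis
      using aux_edge_to_boundary_child below by auto
  next
    case outside
    then show ?thesis
      using aux_edge_leaving ab \<open>a \<in> T\<close> by auto
  qed
qed

lemma contract_edge_from_below:
  assumes ab: "(a, b) \<in> E" and z: "z \<in> BC" "D z a" and ne: "z \<noteq> contract b"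
  shows "(z, contract b) \<in> AE"
proof -
  have "a \<in> V" "b \<in> V"
    using ab edges_subset by auto
  from \<open>b \<in> V\<close> show ?thesis
  proof (cases rule: contract_cases)
    case subtree
    then show ?thesis
      using aux_edge_from_below ab z by auto
  next
    case (below z')
    show ?thesis
    proof (cases "D z' a")
      case True
      then show ?thesis
        using boundary_child_unique below z \<open>a \<in> V\<close> ne by blast
    next
      case False
      then have "b = z'"
        using edge_into_dominated_region ab below by auto
      then have "a = idom E s z'"
        using marked_entering_edge ab boundary_childD(1) below False by auto
      then show ?thesis
        using boundary_childD(2) below z boundary_child_not_dominates_subtree by blast
    qed
  next
    case outside
    then show ?thesis
      using aux_edge_from_below_leaving ab z by auto
  qed
qed

lemma contract_edge_from_outside:
  assumes ab: "(a, b) \<in> E" and "\<not> D r a" and ne: "idom E s r \<noteq> contract b"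
  shows "(idom E s r, contract b) \<in> AE"
proof -
  have "b \<in> V"
    using ab edges_subset by auto
  then show ?thesis
  proof (cases rule: contract_cases)
    case subtree
    then have "b = r"
      using edge_into_dominated_region ab \<open>\<not> D r a\<close> r_dominates_subtree by auto
    moreover have "r \<noteq> s"
      using \<open>\<not> D r a\<close> root_dominates by auto
    ultimately show ?thesis
      using aux_edge_into_r subtree by auto
  next
    case (below z')
    then have "b = r"
      using edge_into_dominated_region ab \<open>\<not> D r a\<close> by auto
    then show ?thesis
      using r_in_subtree below by auto
  next
    case outside
    then show ?thesis
      using ne by auto
  qed
qed

lemma contract_edge:
  assumes ab: "(a, b) \<in> E" and ne: "contract a \<noteq> contract b"
  shows "(contract a, contract b) \<in> AE"
proof -
  have "a \<in> V"
    using ab edges_subset by auto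
  then show ?thesis
  proof (cases rule: contract_cases)
    case subtree
    then show ?thesis
      using contract_edge_from_subtree ab by auto
  next
    case (below z)
    then show ?thesis
      using contract_edge_from_below ab ne by auto
  next
    case outside
    then show ?thesis
      using contract_edge_from_outside ab ne by auto
  qed
qed

text \<open>Each auxiliary vertex \<open>x\<close> of \<open>G\<^sub>r\<close> carries a bridge of \<open>G(s)\<close> that is also an edge of \<open>G\<^sub>r\<close>:
  \<open>(d(x), x)\<close> for a boundary child \<open>x\<close>, and \<open>(d(r), r)\<close> for \<open>x = d(r)\<close>.\<close>

definition bridge_of :: "'a \<Rightarrow> 'a \<times> 'a" where
  "bridge_of x = (if x \<in> BC then (idom E s x, x) else (idom E s r, r))"

lemma bridge_of_on_dpath:
  assumes p: "dpath E p v w" and vT: "v \<in> T" and wT: "w \<in> T"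
    and y: "y \<in> set p" and yT: "contract y \<notin> T"
  shows "bridge_of (contract y) \<in> path_edges p"
proof -
  have yV: "y \<in> V"
    using dpath_set_subset_V p subtree_subset_V vT y by blast
  have pE: "path_edges p \<subseteq> E" "p \<noteq> []" "hd p = v" "last p = w"
    using p unfolding dpath_def by auto
  from yV show ?thesis
  proof (cases rule: contract_cases)
    case subtree
    then show ?thesis using yT by auto
  next
    case (below z)
    have "\<not> D z (hd p)"
      using boundary_child_not_dominates_subtree below vT pE by auto
    then obtain a b where e: "(a, b) \<in> path_edges p" "\<not> D z a" "D z b"
      using path_edge_entering_after_hd[of p "D z" y] pE y below by auto
    then have "b = z"
      using edge_into_dominated_region pE by auto
    then have "a = idom E s z"
      using marked_entering_edge boundary_childD(1) below e pE by auto
    then show ?thesis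
      using e \<open>b = z\<close> below bridge_of_def by auto
  next
    case outside
    have "D r (last p)"
      using r_dominates_subtree wT pE by auto
    then obtain a b where e: "(a, b) \<in> path_edges p" "\<not> D r a" "D r b"
      using path_edge_entering_before_last[of p "D r" y] pE y outside by auto
    then have "b = r"
      using edge_into_dominated_region pE by auto
    then have "a = idom E s r"
      using marked_entering_edge r_marked outside e pE by auto
    then show ?thesis
      using e \<open>b = r\<close> outside bridge_of_def parent_of_rootD by auto
  qed
qed

lemma bridge_of_on_aux_dpath:
  assumes P: "dpath AE P v w" and vT: "v \<in> T" and wT: "w \<in> T"
    and x: "x \<in> set P" and xT: "x \<notin> T"
  shows "bridge_of x \<in> path_edges P"
proof -
  have PE: "path_edges P \<subseteq> AE" "P \<noteq> []" "hd P = v" "last P = w"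
    using P unfolding dpath_def by auto
  have "x \<in> snd ` path_edges P"
    using set_subset_hd_snd_path_edges[of P] PE x xT vT by auto
  then obtain a where a: "(a, x) \<in> path_edges P"
    by force
  then have aAE: "(a, x) \<in> AE"
    using PE by auto
  show ?thesis
  proof (cases "x \<in> BC")
    case True
    then show ?thesis
      using aux_edge_into_boundary_child aAE a bridge_of_def by auto
  next
    case False
    then have x': "r \<noteq> s" "x = idom E s r"
      using aux_edge_endpoints[OF aAE] xT by auto
    have "x \<in> fst ` path_edges P"
      using set_subset_last_fst_path_edges[of P] PE x xT wT by auto
    then obtain b where b: "(x, b) \<in> path_edges P"
      by force
    then have "b = r"
      using aux_edge_from_parent_of_r x' PE by auto
    then show ?thesis
      using b x' False bridge_of_def by auto
  qed
qed

end

section \<open>From \<open>G\<close> to \<open>G\<^sub>r\<close>\<close>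

context subtree_context
begin

lemma dpath_contract:
  assumes p: "dpath E p v w" and vT: "v \<in> T" and wT: "w \<in> T"
  obtains P where "dpath AE P v w"
    "\<And>c d. (c, d) \<in> path_edges P \<Longrightarrow> \<exists>a b. (a, b) \<in> path_edges p \<and> c = contract a \<and> d = contract b"
proof -
  define p' where "p' = remdups_adj (map contract p)"
  have pE: "path_edges p \<subseteq> E" "p \<noteq> []" "hd p = v" "last p = w"
    using p unfolding dpath_def by auto
  have e: "\<exists>a b. (a, b) \<in> path_edges p \<and> c = contract a \<and> d = contract b \<and> c \<noteq> d"
    if "(c, d) \<in> path_edges p'" for c d
  proof -
    have "(c, d) \<in> map_prod contract contract ` path_edges p" "c \<noteq> d"
      using that path_edges_remdups_adj[of "map contract p"] path_edges_map[of contract p]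
      unfolding p'_def by auto
    from this(1) obtain f where "(c, d) = map_prod contract contract f" "f \<in> path_edges p"
      by (rule imageE)
    then show ?thesis
      using \<open>c \<noteq> d\<close> by (cases f) auto
  qed
  have "walk AE p' v w"
    unfolding walk_def
  proof (intro conjI)
    show "p' \<noteq> []" "hd p' = v" "last p' = w"
      using pE contract_subtree vT wT by (simp_all add: p'_def hd_map last_map)
    show "path_edges p' \<subseteq> AE"
    proof
      fix f assume "f \<in> path_edges p'"
      then obtain c d where f: "f = (c, d)" "(c, d) \<in> path_edges p'"
        by (cases f) auto
      then obtain a b where "(a, b) \<in> path_edges p" "c = contract a" "d = contract b" "c \<noteq> d"
        using e by blast
      then show "f \<in> AE"
        using contract_edge pE f by auto
    qed
  qed
  then obtain P where "dpath AE P v w" "path_edges P \<subseteq> path_edges p'"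
    using walk_shorten_to_dpath by metis
  then show ?thesis
    using that e by blast
qed

text \<open>An edge of \<open>G\<^sub>r\<close> inside \<open>T(r)\<close> has a unique preimage, and an edge touching an auxiliary
  vertex \<open>x\<close> forces both paths through the bridge \<open>bridge_of x\<close>.\<close>

lemma contract_edges_of_disjoint_paths_differ:
  assumes p: "dpath E p v w" and q: "dpath E q v w" and disj: "path_edges p \<inter> path_edges q = {}"
    and vT: "v \<in> T" and wT: "w \<in> T"
    and e1: "(a1, b1) \<in> path_edges p" and e2: "(a2, b2) \<in> path_edges q"
  shows "(contract a1, contract b1) \<noteq> (contract a2, contract b2)"
proof
  assume same: "(contract a1, contract b1) = (contract a2, contract b2)"
  have in1: "a1 \<in> set p" "b1 \<in> set p" and in2: "a2 \<in> set q" "b2 \<in> set q"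
    using path_edges_memD'[OF e1] path_edges_memD'[OF e2] by auto
  show False
  proof (cases "contract a1 \<in> T \<and> contract b1 \<in> T")
    case True
    have "set p \<subseteq> V" "set q \<subseteq> V"
      using dpath_set_subset_V p q subtree_subset_V[OF vT] by auto
    then have "a1 \<in> V" "b1 \<in> V" "a2 \<in> V" "b2 \<in> V"
      using in1 in2 by auto
    moreover have "contract a1 \<in> T" "contract b1 \<in> T" "contract a2 \<in> T" "contract b2 \<in> T"
      using True same by simp_all
    ultimately have "a1 \<in> T" "b1 \<in> T" "a2 \<in> T" "b2 \<in> T"
      using contract_in_subtree_iff by blast+
    then have "(a1, b1) = (a2, b2)"
      using same contract_subtree by auto
    then show False
      using disj e1 e2 by blast
  next
    case False
    then consider "contract a1 \<notin> T" | "contract b1 \<notin> T"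
      by blast
    then show False
    proof cases
      case 1
      then have "bridge_of (contract a1) \<in> path_edges p \<inter> path_edges q"
        using bridge_of_on_dpath[OF p vT wT in1(1)] bridge_of_on_dpath[OF q vT wT in2(1)] same by simp
      then show False
        using disj by blast
    next
      case 2
      then have "bridge_of (contract b1) \<in> path_edges p \<inter> path_edges q"
        using bridge_of_on_dpath[OF p vT wT in1(2)] bridge_of_on_dpath[OF q vT wT in2(2)] same by simp
      then show False
        using disj by blast
    qed
  qed
qed

lemma two_edge_paths_aux_if_two_edge_paths:
  assumes vT: "v \<in> T" and wT: "w \<in> T" and t: "two_edge_paths E v w"
  shows "two_edge_paths AE v w"
proof -
  obtain p q where pq: "dpath E p v w" "dpath E q v w" "path_edges p \<inter> path_edges q = {}"
    using t two_edge_paths_def by metis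
  obtain P1 where P1: "dpath AE P1 v w"
    and P1p: "\<And>c d. (c, d) \<in> path_edges P1 \<Longrightarrow> \<exists>a b. (a, b) \<in> path_edges p \<and> c = contract a \<and> d = contract b"
    using dpath_contract[OF pq(1) vT wT] by blast
  obtain P2 where P2: "dpath AE P2 v w"
    and P2q: "\<And>c d. (c, d) \<in> path_edges P2 \<Longrightarrow> \<exists>a b. (a, b) \<in> path_edges q \<and> c = contract a \<and> d = contract b"
    using dpath_contract[OF pq(2) vT wT] by blast
  have "path_edges P1 \<inter> path_edges P2 = {}"
  proof (rule ccontr)
    assume "path_edges P1 \<inter> path_edges P2 \<noteq> {}"
    then obtain c d where cd: "(c, d) \<in> path_edges P1" "(c, d) \<in> path_edges P2"
      by auto
    obtain a1 b1 where e1: "(a1, b1) \<in> path_edges p" "c = contract a1" "d = contract b1"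
      using P1p cd by blast
    obtain a2 b2 where e2: "(a2, b2) \<in> path_edges q" "c = contract a2" "d = contract b2"
      using P2q cd by blast
    show False
      using contract_edges_of_disjoint_paths_differ[OF pq vT wT e1(1) e2(1)] e1(2,3) e2(2,3) by simp
  qed
  then show ?thesis
    unfolding two_edge_paths_def using P1 P2 by blast
qed

lemma two_edge_equiv_in_subtree:
  assumes vT: "v \<in> T" and wV: "w \<in> V"
    and vw: "two_edge_paths E v w" and wv: "two_edge_paths E w v"
  shows "w \<in> T"
proof (rule ccontr)
  assume wT: "w \<notin> T"
  show False
  proof (cases "D r w")
    case True
    then obtain x where x: "x \<noteq> r" "D r x" "D x w" "marked V E s x"
      using wT wV unfolding subtree_iff by blast
    then have "\<not> D x v"
      using not_in_subtree_below_marked vT by blast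
    obtain p q where pq: "dpath E p v w" "dpath E q v w" "path_edges p \<inter> path_edges q = {}"
      using vw two_edge_paths_def by metis
    then have "(idom E s x, x) \<in> path_edges p" "(idom E s x, x) \<in> path_edges q"
      using marked_bridge_separates[OF x(4) x(3) \<open>\<not> D x v\<close>] by auto
    then show False
      using pq(3) by blast
  next
    case False
    then have "r \<noteq> s"
      using root_dominates by auto
    obtain p q where pq: "dpath E p w v" "dpath E q w v" "path_edges p \<inter> path_edges q = {}"
      using wv two_edge_paths_def by metis
    then have "(idom E s r, r) \<in> path_edges p" "(idom E s r, r) \<in> path_edges q"
      using marked_bridge_separates[OF r_marked[OF \<open>r \<noteq> s\<close>] r_dominates_subtree[OF vT] False] by auto
    then show False
      using pq(3) by blast
  qed
qed

end

section \<open>From \<open>G\<^sub>r\<close> back to \<open>G\<close>\<close>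

context subtree_context
begin

lemma walk_below_boundary_child:
  assumes z: "z \<in> BC" and uV: "u \<in> V" and zu: "D z u"
  obtains R where "walk E R z u" "\<forall>y\<in>set R. contract y = z"
proof -
  obtain p where p: "dpath E p s u"
    using reachable_from_root uV by blast
  then have pd: "p \<noteq> []" "last p = u" "distinct p" "path_edges p \<subseteq> E"
    unfolding dpath_def by auto
  have "z \<in> set p"
    using zu p unfolding dominates_def by blast
  then obtain p1 p2 where pp: "p = p1 @ z # p2"
    by (meson split_list)
  define R where "R = z # p2"
  have edges: "path_edges R \<subseteq> path_edges p"
    using path_edges_append_subset[of p1 R] pp R_def by simp
  have last: "last R = u"
    using pd pp R_def by (cases p2) auto
  have "D z y" if y: "y \<in> set R" for y
  proof (rule ccontr)
    assume "\<not> D z y"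
    then obtain a b where ab: "(a, b) \<in> path_edges R" "\<not> D z a" "D z b"
      using path_edge_entering_before_last[of R "D z" y] last zu R_def y by auto
    then have "b = z"
      using edge_into_dominated_region edges pd by blast
    moreover have "b \<in> set p2"
      using path_edges_memD[OF ab(1)] R_def by auto
    ultimately show False
      using pd pp by auto
  qed
  then have "\<forall>y\<in>set R. contract y = z"
    using contract_below_boundary_child z p pp R_def dpath_set_subset_V[OF p root_in_V] by auto
  moreover have "walk E R z u"
    using edges pd last R_def unfolding walk_def by auto
  ultimately show ?thesis
    using that by blast
qed

text \<open>A loop allowed in a realization sits at an auxiliary end point and hence behind its bridge;
  this is what keeps realizations of edge-disjoint paths edge-disjoint.\<close>

definition realizes :: "'a \<times> 'a \<Rightarrow> 'a list \<Rightarrow> bool" where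
  "realizes e W \<longleftrightarrow> walk E W (fst e) (snd e) \<and>
    (\<forall>(a, b)\<in>path_edges W. (contract a, contract b) = e
       \<or> (contract a = contract b \<and> contract a \<notin> T \<and> contract a \<in> {fst e, snd e}))"

lemma realizes_walk: "realizes e W \<Longrightarrow> walk E W (fst e) (snd e)"
  by (simp add: realizes_def)

lemma realizes_path_edge:
  "realizes e W \<Longrightarrow> (a, b) \<in> path_edges W \<Longrightarrow> (contract a, contract b) = e
     \<or> (contract a = contract b \<and> contract a \<notin> T \<and> contract a \<in> {fst e, snd e})"
  unfolding realizes_def by (drule conjunct2) (drule (1) bspec, simp)

lemma realizes_append:
  assumes R: "walk E R c u" and Q: "walk E Q v d" and uv: "(u, v) \<in> E"
    and Rc: "\<forall>y\<in>set R. contract y = c" and Qd: "\<forall>y\<in>set Q. contract y = d"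
    and cT: "path_edges R = {} \<or> c \<notin> T" and dT: "path_edges Q = {} \<or> d \<notin> T"
  shows "realizes (c, d) (R @ Q)"
  unfolding realizes_def
proof (intro conjI ballI)
  have edges: "path_edges (R @ Q) = insert (u, v) (path_edges R \<union> path_edges Q)"
    using R Q path_edges_append[of R Q] unfolding walk_def by auto
  then show "walk E (R @ Q) (fst (c, d)) (snd (c, d))"
    using R Q uv unfolding walk_def by auto
  fix f assume "f \<in> path_edges (R @ Q)"
  then obtain a b where f: "f = (a, b)" and "(a, b) = (u, v) \<or> (a, b) \<in> path_edges R \<or> (a, b) \<in> path_edges Q"
    using edges by (cases f) auto
  then consider "a = u" "b = v" | "(a, b) \<in> path_edges R" | "(a, b) \<in> path_edges Q"
    by auto
  then show "case f of (a, b) \<Rightarrow> (contract a, contract b) = (c, d)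
      \<or> (contract a = contract b \<and> contract a \<notin> T \<and> contract a \<in> {fst (c, d), snd (c, d)})"
  proof cases
    case 1
    have "u \<in> set R" "v \<in> set Q"
      using R Q unfolding walk_def by auto
    then show ?thesis
      using 1 f Rc Qd by simp
  next
    case 2
    then have "contract a = c" "contract b = c" "c \<notin> T"
      using Rc cT path_edges_memD'[OF 2] by auto
    then show ?thesis
      using f by simp
  next
    case 3
    then have "contract a = d" "contract b = d" "d \<notin> T"
      using Qd dT path_edges_memD'[OF 3] by auto
    then show ?thesis
      using f by simp
  qed
qed

lemma realizes_edge:
  assumes "(c, d) \<in> E" "contract c = c" "contract d = d"
  shows "realizes (c, d) [c, d]"
  using realizes_append[OF walk_singleton walk_singleton, of c d] assms by simp

end

locale strong_subtree_context = subtree_context +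
  assumes strongly_connected: "strongly_connected V E"
begin

lemma walk_outside_to_parent_of_r:
  assumes rs: "r \<noteq> s" and xV: "x \<in> V" and nx: "\<not> D r x"
  obtains Q where "walk E Q x (idom E s r)" "\<forall>y\<in>set Q. contract y = idom E s r"
proof -
  obtain q where q: "dpath E q x (idom E s r)"
    using strongly_connected xV parent_of_rootD(4)[OF rs] unfolding strongly_connected_def by blast
  then have qw: "walk E q x (idom E s r)"
    by (rule dpath_imp_walk)
  obtain Q where Q: "walk E Q x (idom E s r)" "\<forall>y\<in>set Q. \<not> D r y"
  proof (cases "\<exists>y\<in>set q. D r y")
    case False
    then show ?thesis
      using that qw by blast
  next
    case True
    then obtain q1 y q2 where qq: "q = q1 @ y # q2" "D r y" "\<forall>y'\<in>set q1. \<not> D r y'"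
      using split_list_first_prop[of q "D r"] by blast
    have "q1 \<noteq> []"
      using qq qw nx unfolding walk_def by (cases q1) auto
    then have "hd q1 = x"
      using qq qw unfolding walk_def by simp
    have "(last q1, y) \<in> path_edges q" and q1q: "path_edges q1 \<subseteq> path_edges q"
      using qq(1) \<open>q1 \<noteq> []\<close> path_edges_append[of q1 "y # q2"] by auto
    then have "(last q1, y) \<in> E"
      using qw unfolding walk_def by auto
    moreover have "\<not> D r (last q1)"
      using qq(3) \<open>q1 \<noteq> []\<close> by simp
    ultimately have "last q1 = idom E s r"
      using edge_into_dominated_region[of "last q1" y r] qq(2)
        marked_entering_edge[OF r_marked[OF rs], of "last q1"] by auto
    then have "walk E q1 x (idom E s r)"
      using \<open>q1 \<noteq> []\<close> \<open>hd q1 = x\<close> q1q qw unfolding walk_def by auto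
    then show ?thesis
      using that qq by blast
  qed
  then show ?thesis
    using that contract_outside by auto
qed

lemma aux_edge_realizable:
  assumes "(c, d) \<in> AE"
  shows "\<exists>W. realizes (c, d) W"
  using assms
proof (cases rule: aux_edgesE)
  case to_boundary_child
  have "(c, d) \<in> E"
    using markedD boundary_childD(1) to_boundary_child by auto
  moreover have "contract c = c" "contract d = d"
    using to_boundary_child contract_subtree boundary_childD(2,6)
      contract_below_boundary_child[OF _ _ dominates_refl] by auto
  ultimately show ?thesis
    using realizes_edge by blast
next
  case into_r
  have "(c, d) \<in> E"
    using markedD r_marked into_r by auto
  moreover have "contract c = c" "contract d = d"
    using into_r contract_outside parent_of_rootD(1) contract_subtree r_in_subtree by auto
  ultimately show ?thesis
    using realizes_edge by blast
next
  case inside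
  then show ?thesis
    using realizes_edge contract_subtree by metis
next
  case (leaving v)
  obtain Q where Q: "walk E Q v d" "\<forall>y\<in>set Q. contract y = d"
    using walk_outside_to_parent_of_r[of v] leaving edges_subset by blast
  have "realizes (c, d) ([c] @ Q)"
  proof (rule realizes_append[OF walk_singleton Q(1) _ _ Q(2)])
    show "path_edges Q = {} \<or> d \<notin> T"
      using leaving parent_of_rootD(2) by simp
  qed (use leaving contract_subtree in auto)
  then show ?thesis
    by blast
next
  case (from_below u)
  obtain R where R: "walk E R c u" "\<forall>y\<in>set R. contract y = c"
    using walk_below_boundary_child[of c u] from_below edges_subset by blast
  have "realizes (c, d) (R @ [d])"
  proof (rule realizes_append[OF R(1) walk_singleton _ R(2)])
    show "path_edges R = {} \<or> c \<notin> T"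
      using from_below boundary_childD(5) by simp
  qed (use from_below contract_subtree in auto)
  then show ?thesis
    by blast
next
  case (from_below_leaving u v)
  obtain R where R: "walk E R c u" "\<forall>y\<in>set R. contract y = c"
    using walk_below_boundary_child[of c u] from_below_leaving edges_subset by blast
  obtain Q where Q: "walk E Q v d" "\<forall>y\<in>set Q. contract y = d"
    using walk_outside_to_parent_of_r[of v] from_below_leaving edges_subset by blast
  have "realizes (c, d) (R @ Q)"
  proof (rule realizes_append[OF R(1) Q(1) _ R(2) Q(2)])
    show "path_edges R = {} \<or> c \<notin> T" "path_edges Q = {} \<or> d \<notin> T"
      using from_below_leaving boundary_childD(5) parent_of_rootD(2) by simp_all
  qed (use from_below_leaving in auto)
  then show ?thesis
    by blast
qed

definition realization :: "'a \<times> 'a \<Rightarrow> 'a list" where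
  "realization e = (SOME W. realizes e W)"

lemma realizes_realization:
  assumes "e \<in> AE"
  shows "realizes e (realization e)"
proof -
  have "\<exists>W. realizes e W"
    using aux_edge_realizable[of "fst e" "snd e"] assms by simp
  then show ?thesis
    unfolding realization_def by (rule someI_ex)
qed

lemma dpath_lift:
  assumes P: "dpath AE P v w"
  obtains q where "dpath E q v w" "path_edges q \<subseteq> (\<Union>e\<in>path_edges P. path_edges (realization e))"
proof -
  have P': "P \<noteq> []" "hd P = v" "last P = w" "path_edges P \<subseteq> AE"
    using P unfolding dpath_def by auto
  have "walk E (realization e) (fst e) (snd e)" if "e \<in> path_edges P" for e
    using realizes_walk[OF realizes_realization[OF subsetD[OF P'(4) that]]] .
  then have spliced: "walk E (splice_walks realization P) (hd P) (last P)
    \<and> path_edges (splice_walks realization P) \<subseteq> (\<Union>e\<in>path_edges P. path_edges (realization e))"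
    by (rule walk_splice_walks[OF P'(1)])
  then have "walk E (splice_walks realization P) v w"
    using P'(2,3) by simp
  then obtain q where q: "dpath E q v w" "path_edges q \<subseteq> path_edges (splice_walks realization P)"
    using walk_shorten_to_dpath by metis
  have "path_edges q \<subseteq> (\<Union>e\<in>path_edges P. path_edges (realization e))"
    using q(2) spliced by (rule order_trans[OF _ conjunct2])
  then show ?thesis
    by (rule that[OF q(1)])
qed

lemma realizations_of_disjoint_aux_paths_disjoint:
  assumes P1: "dpath AE P1 v w" and P2: "dpath AE P2 v w"
    and disj: "path_edges P1 \<inter> path_edges P2 = {}" and vT: "v \<in> T" and wT: "w \<in> T"
    and e1: "e1 \<in> path_edges P1" and e2: "e2 \<in> path_edges P2"
  shows "path_edges (realization e1) \<inter> path_edges (realization e2) = {}"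
proof (rule ccontr)
  assume "path_edges (realization e1) \<inter> path_edges (realization e2) \<noteq> {}"
  then obtain a b where ab: "(a, b) \<in> path_edges (realization e1)" "(a, b) \<in> path_edges (realization e2)"
    by auto
  have "e1 \<in> AE" "e2 \<in> AE"
    using e1 e2 P1 P2 unfolding dpath_def by auto
  have o1: "(contract a, contract b) = e1
      \<or> (contract a = contract b \<and> contract a \<notin> T \<and> contract a \<in> {fst e1, snd e1})"
    and o2: "(contract a, contract b) = e2
      \<or> (contract a = contract b \<and> contract a \<notin> T \<and> contract a \<in> {fst e2, snd e2})"
    using realizes_path_edge[OF realizes_realization[OF \<open>e1 \<in> AE\<close>] ab(1)]
      realizes_path_edge[OF realizes_realization[OF \<open>e2 \<in> AE\<close>] ab(2)] by simp_all
  have neq: "fst e1 \<noteq> snd e1" "fst e2 \<noteq> snd e2"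
    using path_edges_distinct_neq[of P1 "fst e1" "snd e1"] path_edges_distinct_neq[of P2 "fst e2" "snd e2"]
      e1 e2 P1 P2 unfolding dpath_def by auto
  have ends: "fst e1 \<in> set P1" "snd e1 \<in> set P1" "fst e2 \<in> set P2" "snd e2 \<in> set P2"
    using path_edges_memD'[of "fst e1" "snd e1" P1] path_edges_memD'[of "fst e2" "snd e2" P2] e1 e2
    by auto
  show False
  proof (cases "(contract a, contract b) = e1")
    case True
    then have "e2 = e1"
      using o2 neq(1) by auto
    then show False
      using e1 e2 disj by blast
  next
    case False
    then have x: "contract a \<notin> T" "contract a \<in> set P1" "contract a = contract b"
      using o1 ends by auto
    moreover have "contract a \<in> set P2"
      using o2 neq(2) ends x(3) by auto
    ultimately have "bridge_of (contract a) \<in> path_edges P1" "bridge_of (contract a) \<in> path_edges P2"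
      using bridge_of_on_aux_dpath[OF P1 vT wT] bridge_of_on_aux_dpath[OF P2 vT wT] by auto
    then show False
      using disj by blast
  qed
qed

lemma two_edge_paths_if_two_edge_paths_aux:
  assumes vT: "v \<in> T" and wT: "w \<in> T" and t: "two_edge_paths AE v w"
  shows "two_edge_paths E v w"
proof -
  obtain P1 P2 where PP: "dpath AE P1 v w" "dpath AE P2 v w" "path_edges P1 \<inter> path_edges P2 = {}"
    using t two_edge_paths_def by metis
  obtain q1 where q1: "dpath E q1 v w" "path_edges q1 \<subseteq> (\<Union>e\<in>path_edges P1. path_edges (realization e))"
    using dpath_lift[OF PP(1)] by blast
  obtain q2 where q2: "dpath E q2 v w" "path_edges q2 \<subseteq> (\<Union>e\<in>path_edges P2. path_edges (realization e))"
    using dpath_lift[OF PP(2)] by blast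
  have "path_edges q1 \<inter> path_edges q2 = {}"
  proof (rule ccontr)
    assume "path_edges q1 \<inter> path_edges q2 \<noteq> {}"
    then obtain f where "f \<in> path_edges q1" "f \<in> path_edges q2"
      by auto
    then obtain e1 e2 where "e1 \<in> path_edges P1" "e2 \<in> path_edges P2"
      and "f \<in> path_edges (realization e1)" "f \<in> path_edges (realization e2)"
      using q1(2) q2(2) by blast
    then show False
      using realizations_of_disjoint_aux_paths_disjoint[OF PP vT wT] by blast
  qed
  then show ?thesis
    unfolding two_edge_paths_def using q1(1) q2(1) by blast
qed

end

theorem mainTheorem10:
  fixes V :: "'a set" and E :: "('a \<times> 'a) set" and s v w :: 'a
  assumes "finite V"
    and "E \<subseteq> V \<times> V"
    and "strongly_connected V E"
    and "s \<in> V" and "v \<in> V" and "w \<in> V" and "v \<noteq> w"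
  shows "two_edge_equiv E v w \<longleftrightarrow>
    (\<exists>r. subtree_root V E s r \<and> v \<in> subtree V E s r \<and> w \<in> subtree V E s r
         \<and> two_edge_equiv (aux_edges V E s r) v w)"
proof
  assume "two_edge_equiv E v w"
  then have vw: "two_edge_paths E v w" and wv: "two_edge_paths E w v"
    using assms(7) unfolding two_edge_equiv_def by auto
  interpret flow_graph V E s
    using assms(2-4) by unfold_locales (auto simp: strongly_connected_def)
  obtain r where r: "subtree_root V E s r" "v \<in> subtree V E s r"
    using exists_subtree_root assms(5) by blast
  interpret subtree_context V E s r
    using r(1) by unfold_locales
  have "w \<in> subtree V E s r"
    using two_edge_equiv_in_subtree r(2) assms(6) vw wv .
  then show "\<exists>r. subtree_root V E s r \<and> v \<in> subtree V E s r \<and> w \<in> subtree V E s r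
      \<and> two_edge_equiv (aux_edges V E s r) v w"
    using r vw wv two_edge_paths_aux_if_two_edge_paths unfolding two_edge_equiv_def by blast
next
  assume "\<exists>r. subtree_root V E s r \<and> v \<in> subtree V E s r \<and> w \<in> subtree V E s r
      \<and> two_edge_equiv (aux_edges V E s r) v w"
  then obtain r where r: "subtree_root V E s r" "v \<in> subtree V E s r" "w \<in> subtree V E s r"
    and aux: "two_edge_equiv (aux_edges V E s r) v w"
    by blast
  interpret strong_subtree_context V E s r
    using assms(2-4) r(1) by unfold_locales (auto simp: strongly_connected_def)
  show "two_edge_equiv E v w"
    using aux r(2,3) two_edge_paths_if_two_edge_paths_aux unfolding two_edge_equiv_def by blast
qed

end
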